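(* Let $I$ be a prime ideal of $\mathbb{R}[x]=\mathbb{R}[x_1,\dots,x_n]$ such that $I'=\mathbb{C}[x]I$ is not prime in $\mathbb{C}[x]$. Then there exists an irreducible polynomial $g\in\mathbb{C}[x]\setminus I'$ such that $g\overline{g}\in I$.
   Context: $\mathbb{C}[x]I=\{\sum p_ih_i: p_i\in\mathbb{C}[x],h_i\in I\}$ is the ideal of $\mathbb{C}[x]$ generated by $I$. For $g=\sum_a g_a x^a\in\mathbb{C}[x]$, $\overline{g}=\sum_a\overline{g_a}x^a$ (coefficientwise complex conjugation). *)

theory Defs
  imports Complex_Main "HOL-Library.Poly_Mapping" "HOL-Computational_Algebra.Factorial_Ring"
begin

type_synonym ('v, 'a) mpoly = "('v \<Rightarrow>\<^sub>0 nat) \<Rightarrow>\<^sub>0 'a"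

definition is_ideal :: "'a::comm_ring_1 set \<Rightarrow> bool" where
  "is_ideal I \<longleftrightarrow> 0 \<in> I \<and> (\<forall>a\<in>I. \<forall>b\<in>I. a + b \<in> I) \<and> (\<forall>r a. a \<in> I \<longrightarrow> r * a \<in> I)"

definition prime_ideal :: "'a::comm_ring_1 set \<Rightarrow> bool" where
  "prime_ideal I \<longleftrightarrow> is_ideal I \<and> 1 \<notin> I \<and> (\<forall>a b. a * b \<in> I \<longrightarrow> a \<in> I \<or> b \<in> I)"

definition ideal_gen :: "'a::comm_ring_1 set \<Rightarrow> 'a set" where
  "ideal_gen S = {(\<Sum>i<m. p i * h i) | (m::nat) (p::nat \<Rightarrow> 'a) (h::nat \<Rightarrow> 'a). \<forall>i<m. h i \<in> S}"

definition complexify :: "('v, real) mpoly \<Rightarrow> ('v, complex) mpoly" where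
  "complexify f = Poly_Mapping.map complex_of_real f"

definition conj_poly :: "('v, complex) mpoly \<Rightarrow> ('v, complex) mpoly" where
  "conj_poly g = Poly_Mapping.map cnj g"

end

theory Submission
  imports Defs "HOL-Library.Countable"
begin

text \<open>Write \<open>J\<close> for the extension of \<open>I\<close> to \<open>\<complex>[x]\<close>. Every complex polynomial is
  \<open>a + i b\<close> with \<open>a, b\<close> real, and \<open>J\<close> consists exactly of those with \<open>a, b \<in> I\<close>; in
  particular \<open>J \<inter> \<real>[x] = I\<close>. The norm \<open>N g = g \<cdot> conj g\<close> is a real polynomial and is
  multiplicative. If \<open>a b \<in> J\<close> with \<open>a, b \<notin> J\<close>, then \<open>N a \<cdot> N b = N (a b) \<in> J \<inter> \<real>[x] = I\<close>,
  so some \<open>g \<notin> J\<close> has \<open>N g \<in> I\<close>. Such a \<open>g\<close> whose leading monomial has least degree is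
  irreducible: if \<open>g = c d\<close>, primality of \<open>I\<close> puts \<open>c\<close> or \<open>d\<close> in the same situation, so the
  other factor has a constant leading monomial and is a unit.\<close>

lemma lookup_times_sum:
  fixes f g :: "'m::comm_monoid_add \<Rightarrow>\<^sub>0 'a::comm_semiring_0"
  assumes "finite A" "Poly_Mapping.keys f \<subseteq> A" "finite B" "Poly_Mapping.keys g \<subseteq> B"
  shows "Poly_Mapping.lookup (f * g) k =
    (\<Sum>(a, b)\<in>A \<times> B. if k = a + b then Poly_Mapping.lookup f a * Poly_Mapping.lookup g b else 0)"
proof -
  have "Poly_Mapping.lookup (f * g) k =
      (\<Sum>(a, b). Poly_Mapping.lookup f a * Poly_Mapping.lookup g b when k = a + b)"
    by (simp add: times_poly_mapping.rep_eq prod_fun_unfold_prod)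
  also have "\<dots> = (\<Sum>(a, b)\<in>A \<times> B. Poly_Mapping.lookup f a * Poly_Mapping.lookup g b when k = a + b)"
    using assms by (intro Sum_any.expand_superset)
      (auto simp: when_def in_keys_iff subset_iff dest!: mult_not_zero)
  finally show ?thesis
    by (simp add: when_def)
qed

lemma lookup_map_of_zero: "h 0 = 0 \<Longrightarrow> Poly_Mapping.lookup (Poly_Mapping.map h f) k = h (Poly_Mapping.lookup f k)"
  by (simp add: map.rep_eq when_def)

lemma keys_map_subset: "Poly_Mapping.keys (Poly_Mapping.map h f) \<subseteq> Poly_Mapping.keys f"
  by (auto simp: in_keys_iff map.rep_eq)

lemma map_times_hom:
  fixes f g :: "'m::comm_monoid_add \<Rightarrow>\<^sub>0 'a::comm_semiring_0" and h :: "'a \<Rightarrow> 'b::comm_semiring_0"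
  assumes "h 0 = 0" "\<And>x y. h (x + y) = h x + h y" "\<And>x y. h (x * y) = h x * h y"
  shows "Poly_Mapping.map h (f * g) = Poly_Mapping.map h f * Poly_Mapping.map h g"
proof (rule poly_mapping_eqI)
  fix k
  let ?A = "Poly_Mapping.keys f" and ?B = "Poly_Mapping.keys g"
  have "Poly_Mapping.lookup (Poly_Mapping.map h (f * g)) k
      = h (\<Sum>(a, b)\<in>?A \<times> ?B. if k = a + b then Poly_Mapping.lookup f a * Poly_Mapping.lookup g b else 0)"
    by (simp add: assms(1) lookup_map_of_zero lookup_times_sum[of ?A _ ?B])
  also have "\<dots> = (\<Sum>(a, b)\<in>?A \<times> ?B.
      if k = a + b then h (Poly_Mapping.lookup f a) * h (Poly_Mapping.lookup g b) else 0)"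
    by (simp add: sum_comp_morphism[symmetric, of h] assms o_def split_def if_distrib cong: if_cong)
  also have "\<dots> = Poly_Mapping.lookup (Poly_Mapping.map h f * Poly_Mapping.map h g) k"
    by (simp add: keys_map_subset lookup_times_sum[of ?A _ ?B] split_def)
      (simp only: lookup_map_of_zero[of h, OF assms(1)])
  finally show "Poly_Mapping.lookup (Poly_Mapping.map h (f * g)) k
      = Poly_Mapping.lookup (Poly_Mapping.map h f * Poly_Mapping.map h g) k" .
qed

text \<open>Exponent vectors over an unordered variable type carry no order instance; a monomial
  order is obtained by pulling back an ordered monoid along an injective additive map.\<close>

locale monomial_embedding =
  fixes \<iota> :: "'m::comm_monoid_add \<Rightarrow> 'n::{ordered_cancel_comm_monoid_add, linorder}"
  assumes inj: "inj \<iota>"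
    and add: "\<iota> (a + b) = \<iota> a + \<iota> b"
    and nonneg: "0 \<le> \<iota> a"
begin

definition lead_monom :: "('m \<Rightarrow>\<^sub>0 'a::zero) \<Rightarrow> 'm" where
  "lead_monom f = inv \<iota> (Max (\<iota> ` Poly_Mapping.keys f))"

lemma
  assumes "f \<noteq> 0"
  shows lead_monom_in_keys: "lead_monom f \<in> Poly_Mapping.keys f"
    and le_lead_monom: "k \<in> Poly_Mapping.keys f \<Longrightarrow> \<iota> k \<le> \<iota> (lead_monom f)"
proof -
  have "Max (\<iota> ` Poly_Mapping.keys f) \<in> \<iota> ` Poly_Mapping.keys f"
    using assms by (intro Max_in) auto
  then obtain m where m: "m \<in> Poly_Mapping.keys f" "Max (\<iota> ` Poly_Mapping.keys f) = \<iota> m"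
    by blast
  then have "lead_monom f = m"
    by (simp add: lead_monom_def inj)
  with m show "lead_monom f \<in> Poly_Mapping.keys f" "k \<in> Poly_Mapping.keys f \<Longrightarrow> \<iota> k \<le> \<iota> (lead_monom f)"
    by (simp_all flip: m(2))
qed

lemma iota_zero: "\<iota> 0 = 0"
  using add[of 0 0] by (metis add.right_neutral add_left_cancel)

lemma lead_monom_eq_zero:
  assumes "f \<noteq> 0" "lead_monom f = 0"
  shows "Poly_Mapping.keys f \<subseteq> {0}"
proof
  fix k assume "k \<in> Poly_Mapping.keys f"
  then have "\<iota> k \<le> \<iota> 0"
    using assms le_lead_monom by metis
  then have "\<iota> k = \<iota> 0"
    using nonneg[of k] by (simp add: iota_zero)
  then show "k \<in> {0}"
    using inj by (simp add: inj_eq)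
qed

lemma sum_eq_lead_monoms:
  assumes "f \<noteq> 0" "g \<noteq> 0" "a \<in> Poly_Mapping.keys f" "b \<in> Poly_Mapping.keys g"
    and "lead_monom f + lead_monom g = a + b"
  shows "a = lead_monom f" "b = lead_monom g"
proof -
  have le: "\<iota> a \<le> \<iota> (lead_monom f)" "\<iota> b \<le> \<iota> (lead_monom g)"
    using assms le_lead_monom by blast+
  have sum: "\<iota> a + \<iota> b = \<iota> (lead_monom f) + \<iota> (lead_monom g)"
    using assms(5) by (metis add)
  have "\<iota> a = \<iota> (lead_monom f)"
    using add_less_le_mono[of "\<iota> a" "\<iota> (lead_monom f)", OF _ le(2)] le(1) sum
    by (metis order.not_eq_order_implies_strict less_irrefl)
  moreover from this sum have "\<iota> b = \<iota> (lead_monom g)"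
    by simp
  ultimately show "a = lead_monom f" "b = lead_monom g"
    using inj by (simp_all add: inj_eq)
qed

lemma lookup_times_lead_monoms:
  fixes f g :: "'m \<Rightarrow>\<^sub>0 'a::comm_semiring_0"
  assumes "f \<noteq> 0" "g \<noteq> 0"
  shows "Poly_Mapping.lookup (f * g) (lead_monom f + lead_monom g)
    = Poly_Mapping.lookup f (lead_monom f) * Poly_Mapping.lookup g (lead_monom g)"
proof -
  let ?A = "Poly_Mapping.keys f" and ?B = "Poly_Mapping.keys g"
  let ?c = "\<lambda>(a, b). Poly_Mapping.lookup f a * Poly_Mapping.lookup g b"
  have "Poly_Mapping.lookup (f * g) (lead_monom f + lead_monom g)
      = (\<Sum>p\<in>?A \<times> ?B. if p = (lead_monom f, lead_monom g) then ?c p else 0)"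
    unfolding lookup_times_sum[OF finite_keys subset_refl finite_keys subset_refl]
    using sum_eq_lead_monoms[OF assms] by (intro sum.cong) (auto split: if_splits)
  also have "\<dots> = ?c (lead_monom f, lead_monom g)"
    using lead_monom_in_keys[OF assms(1)] lead_monom_in_keys[OF assms(2)] by simp
  finally show ?thesis
    by simp
qed

lemma keys_times_le_lead_monoms:
  assumes "f \<noteq> 0" "g \<noteq> 0" "k \<in> Poly_Mapping.keys (f * g)"
  shows "\<iota> k \<le> \<iota> (lead_monom f + lead_monom g)"
proof -
  obtain a b where "k = a + b" "a \<in> Poly_Mapping.keys f" "b \<in> Poly_Mapping.keys g"
    using keys_mult assms(3) by blast
  then show ?thesis
    using assms(1,2) by (simp add: add add_mono le_lead_monom)
qed

lemma lead_monom_times: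
  fixes f g :: "'m \<Rightarrow>\<^sub>0 'a::{comm_semiring_0, semiring_no_zero_divisors}"
  assumes "f \<noteq> 0" "g \<noteq> 0"
  shows "f * g \<noteq> 0" and "lead_monom (f * g) = lead_monom f + lead_monom g"
proof -
  have "lead_monom f + lead_monom g \<in> Poly_Mapping.keys (f * g)"
    using lookup_times_lead_monoms[OF assms] lead_monom_in_keys[OF assms(1)] lead_monom_in_keys[OF assms(2)]
    by (simp add: in_keys_iff)
  then show fg: "f * g \<noteq> 0"
    by auto
  have "\<iota> (lead_monom (f * g)) = \<iota> (lead_monom f + lead_monom g)"
    using keys_times_le_lead_monoms[OF assms lead_monom_in_keys[OF fg]] le_lead_monom[OF fg] \<open>_ \<in> _\<close>
    by (meson order.antisym)
  then show "lead_monom (f * g) = lead_monom f + lead_monom g"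
    using inj by (simp add: inj_eq)
qed

end

lemma zero_le_poly_mapping:
  fixes m :: "'a::wellorder \<Rightarrow>\<^sub>0 'b::{canonically_ordered_monoid_add, linorder}"
  shows "0 \<le> m"
proof (cases "m = 0")
  case False
  then have ex: "\<exists>k. Poly_Mapping.lookup m k \<noteq> 0"
    by (simp add: poly_mapping_eq_iff fun_eq_iff)
  define k where "k = (LEAST k. Poly_Mapping.lookup m k \<noteq> 0)"
  have "Poly_Mapping.lookup m k \<noteq> 0" "\<And>k'. k' < k \<Longrightarrow> Poly_Mapping.lookup m k' = 0"
    unfolding k_def using LeastI_ex[OF ex] not_less_Least by auto
  then have "less_fun (Poly_Mapping.lookup 0) (Poly_Mapping.lookup m)"
    by (intro less_funI exI[of _ k]) (simp add: zero_less_iff_neq_zero)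
  then show ?thesis
    by (simp add: less_eq_poly_mapping.rep_eq)
qed simp

lift_definition rename_to_nat :: "('v::countable \<Rightarrow>\<^sub>0 'a::zero) \<Rightarrow> nat \<Rightarrow>\<^sub>0 'a"
  is "\<lambda>m i. if i \<in> range (to_nat :: 'v \<Rightarrow> nat) then m (from_nat i) else 0"
proof -
  fix m :: "'v \<Rightarrow> 'a"
  assume "finite {v. m v \<noteq> 0}"
  moreover have "{i. (if i \<in> range (to_nat :: 'v \<Rightarrow> nat) then m (from_nat i) else 0) \<noteq> 0}
      \<subseteq> to_nat ` {v. m v \<noteq> 0}"
    by auto
  ultimately show "finite {i. (if i \<in> range (to_nat :: 'v \<Rightarrow> nat) then m (from_nat i) else 0) \<noteq> 0}"
    by (rule finite_surj)
qed

lemma lookup_rename_to_nat: "Poly_Mapping.lookup (rename_to_nat m) (to_nat v) = Poly_Mapping.lookup m v"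
  by transfer simp

interpretation lex: monomial_embedding "rename_to_nat :: ('v::countable \<Rightarrow>\<^sub>0 nat) \<Rightarrow> nat \<Rightarrow>\<^sub>0 nat"
proof
  show "inj (rename_to_nat :: ('v \<Rightarrow>\<^sub>0 nat) \<Rightarrow> _)"
    by (rule injI, rule poly_mapping_eqI) (metis lookup_rename_to_nat)
  show "rename_to_nat (a + b) = rename_to_nat a + rename_to_nat b" for a b :: "'v \<Rightarrow>\<^sub>0 nat"
    by transfer auto
qed (rule zero_le_poly_mapping)

definition monom_degree :: "('v \<Rightarrow>\<^sub>0 nat) \<Rightarrow> nat" where
  "monom_degree m = sum (Poly_Mapping.lookup m) (Poly_Mapping.keys m)"

lemma monom_degree_add: "monom_degree (a + b) = monom_degree a + monom_degree b"
  unfolding monom_degree_def using setsum_keys_plus_distrib[of "\<lambda>_ n. n" a b] by simp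

lemma monom_degree_eq_0_iff: "monom_degree m = 0 \<longleftrightarrow> m = 0"
  by (auto simp: monom_degree_def in_keys_iff poly_mapping_eq_iff fun_eq_iff)

definition lead_degree :: "('v::countable, 'a::zero) mpoly \<Rightarrow> nat" where
  "lead_degree f = monom_degree (lex.lead_monom f)"

lemma lead_degree_times:
  fixes f g :: "('v::countable, 'a::{comm_semiring_0, semiring_no_zero_divisors}) mpoly"
  assumes "f \<noteq> 0" "g \<noteq> 0"
  shows "lead_degree (f * g) = lead_degree f + lead_degree g"
  using assms by (simp add: lead_degree_def lex.lead_monom_times monom_degree_add)

lemma dvd_one_if_lead_degree_eq_0:
  fixes f :: "('v::countable, 'a::field) mpoly"
  assumes "f \<noteq> 0" "lead_degree f = 0"
  shows "f dvd 1"
proof -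
  define c where "c = Poly_Mapping.lookup f 0"
  have "Poly_Mapping.keys f \<subseteq> {0}"
    using assms by (intro lex.lead_monom_eq_zero) (simp_all add: lead_degree_def monom_degree_eq_0_iff)
  then have f: "f = Poly_Mapping.single 0 c"
    by (intro poly_mapping_eqI) (auto simp: c_def lookup_single when_def in_keys_iff)
  with assms(1) have "c \<noteq> 0"
    by auto
  with f have "f * Poly_Mapping.single 0 (inverse c) = 1"
    by (simp add: mult_single)
  then show ?thesis
    by (rule dvdI[OF sym])
qed

lemma ex_irreducible_if_split_closed:
  fixes x\<^sub>0 :: "('v::countable, 'a::field) mpoly"
  assumes "P x\<^sub>0"
    and nonunit: "\<And>x. P x \<Longrightarrow> x \<noteq> 0 \<and> \<not> x dvd 1"
    and split: "\<And>c d. P (c * d) \<Longrightarrow> P c \<or> P d"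
  shows "\<exists>x. irreducible x \<and> P x"
proof -
  obtain x where x: "P x" and minimal: "\<And>y. P y \<Longrightarrow> lead_degree x \<le> lead_degree y"
    using ex_has_least_nat[of P x\<^sub>0 lead_degree] assms(1) by auto
  have "c dvd 1 \<or> d dvd 1" if cd: "x = c * d" for c d
  proof -
    from cd nonunit[OF x] have "c \<noteq> 0" "d \<noteq> 0"
      by auto
    with cd have "lead_degree x = lead_degree c + lead_degree d"
      by (simp add: lead_degree_times)
    moreover from x cd have "P c \<or> P d"
      by (simp add: split)
    then have "lead_degree x \<le> lead_degree c \<or> lead_degree x \<le> lead_degree d"
      using minimal by blast
    ultimately have "lead_degree d = 0 \<or> lead_degree c = 0"
      by linarith
    then show ?thesis
      using \<open>c \<noteq> 0\<close> \<open>d \<noteq> 0\<close> dvd_one_if_lead_degree_eq_0 by blast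
  qed
  then have "irreducible x"
    using nonunit[OF x] by (simp add: irreducible_def)
  with x show ?thesis
    by blast
qed

definition re_part :: "('v, complex) mpoly \<Rightarrow> ('v, real) mpoly" where
  "re_part z = Poly_Mapping.map Re z"

definition im_part :: "('v, complex) mpoly \<Rightarrow> ('v, real) mpoly" where
  "im_part z = Poly_Mapping.map Im z"

definition imag_unit :: "('v, complex) mpoly" where
  "imag_unit = Poly_Mapping.single 0 \<i>"

lemma lookup_complexify [simp]:
  "Poly_Mapping.lookup (complexify f) k = of_real (Poly_Mapping.lookup f k)"
  by (simp add: complexify_def lookup_map_of_zero)

lemma lookup_conj_poly [simp]: "Poly_Mapping.lookup (conj_poly g) k = cnj (Poly_Mapping.lookup g k)"
  by (simp add: conj_poly_def lookup_map_of_zero)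

lemma lookup_re_part [simp]: "Poly_Mapping.lookup (re_part z) k = Re (Poly_Mapping.lookup z k)"
  by (simp add: re_part_def lookup_map_of_zero)

lemma lookup_im_part [simp]: "Poly_Mapping.lookup (im_part z) k = Im (Poly_Mapping.lookup z k)"
  by (simp add: im_part_def lookup_map_of_zero)

lemma re_part_add: "re_part (z + w) = re_part z + re_part w"
  and im_part_add: "im_part (z + w) = im_part z + im_part w"
  by (simp_all add: poly_mapping_eq_iff fun_eq_iff lookup_add)

lemma re_part_zero [simp]: "re_part 0 = 0"
  and im_part_zero [simp]: "im_part 0 = 0"
  by (simp_all add: poly_mapping_eq_iff fun_eq_iff)

lemma re_part_complexify [simp]: "re_part (complexify f) = f"
  and im_part_complexify [simp]: "im_part (complexify f) = 0"
  by (simp_all add: poly_mapping_eq_iff fun_eq_iff)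

lemma lookup_imag_unit_times [simp]:
  "Poly_Mapping.lookup (imag_unit * p) k = \<i> * Poly_Mapping.lookup p k"
  by (simp add: imag_unit_def flip: mult_map_scale_conv_mult) (simp add: lookup_map_of_zero)

lemma imag_unit_squared: "imag_unit * imag_unit = (-1 :: ('v, complex) mpoly)"
  by (simp add: imag_unit_def mult_single single_uminus)

lemma complexify_add: "complexify (f + g) = complexify f + complexify g"
  by (rule poly_mapping_eqI) (simp add: lookup_add)

lemma complexify_diff: "complexify (f - g) = complexify f - complexify g"
  by (rule poly_mapping_eqI) (simp add: lookup_minus)

lemma complexify_mult: "complexify (f * g) = complexify f * complexify g"
  unfolding complexify_def by (rule map_times_hom) simp_all

lemma complexify_zero [simp]: "complexify 0 = 0"
  by (rule poly_mapping_eqI) simp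

lemma complexify_one: "complexify 1 = 1"
  by (rule poly_mapping_eqI) (simp add: lookup_one when_def)

lemma complexify_inject: "complexify f = complexify g \<longleftrightarrow> f = g"
  by (simp add: poly_mapping_eq_iff fun_eq_iff)

lemma conj_poly_mult: "conj_poly (f * g) = conj_poly f * conj_poly g"
  unfolding conj_poly_def by (rule map_times_hom) simp_all

lemma conj_poly_one: "conj_poly 1 = 1"
  by (rule poly_mapping_eqI) (simp add: lookup_one when_def)

lemma re_part_complex_form [simp]: "re_part (complexify a + imag_unit * complexify b) = a"
  by (rule poly_mapping_eqI) (simp add: lookup_add)

lemma im_part_complex_form [simp]: "im_part (complexify a + imag_unit * complexify b) = b"
  by (rule poly_mapping_eqI) (simp add: lookup_add)

lemma complex_form_re_im: "complexify (re_part z) + imag_unit * complexify (im_part z) = z"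
  by (rule poly_mapping_eqI) (simp add: lookup_add complex_eq_iff)

lemma complex_form_times:
  "(complexify a + imag_unit * complexify b) * (complexify c + imag_unit * complexify d)
    = complexify (a * c - b * d) + imag_unit * complexify (a * d + b * c)"
proof -
  have "(complexify a + imag_unit * complexify b) * (complexify c + imag_unit * complexify d)
      = complexify a * complexify c + imag_unit * (complexify a * complexify d + complexify b * complexify c)
        + (imag_unit * imag_unit) * (complexify b * complexify d)"
    by (simp add: algebra_simps)
  then show ?thesis
    by (simp add: imag_unit_squared complexify_add complexify_diff complexify_mult)
qed

lemma re_part_times: "re_part (r * z) = re_part r * re_part z - im_part r * im_part z"
  and im_part_times: "im_part (r * z) = re_part r * im_part z + im_part r * re_part z"
  using complex_form_times[of "re_part r" "im_part r" "re_part z" "im_part z"]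
  by (simp_all add: complex_form_re_im)

definition conj_norm :: "('v, complex) mpoly \<Rightarrow> ('v, real) mpoly" where
  "conj_norm x = re_part (x * conj_poly x)"

lemma complexify_conj_norm: "complexify (conj_norm x) = x * conj_poly x"
proof -
  have "re_part (conj_poly x) = re_part x" "im_part (conj_poly x) = - im_part x"
    by (simp_all add: poly_mapping_eq_iff fun_eq_iff)
  then have "im_part (x * conj_poly x) = 0"
    by (simp add: im_part_times algebra_simps)
  then show ?thesis
    unfolding conj_norm_def using complex_form_re_im[of "x * conj_poly x"] by simp
qed

lemma conj_norm_mult: "conj_norm (x * y) = conj_norm x * conj_norm y"
  by (simp add: complexify_conj_norm complexify_mult conj_poly_mult ac_simps flip: complexify_inject)

lemma conj_norm_one: "conj_norm 1 = 1"
  by (simp add: complexify_conj_norm complexify_one conj_poly_one flip: complexify_inject)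

lemma is_idealD:
  assumes "is_ideal I"
  shows "0 \<in> I" "a \<in> I \<Longrightarrow> b \<in> I \<Longrightarrow> a + b \<in> I" "a \<in> I \<Longrightarrow> r * a \<in> I"
    and "a \<in> I \<Longrightarrow> b \<in> I \<Longrightarrow> a - b \<in> I"
  using assms unfolding is_ideal_def
  by (blast, blast, blast, metis diff_conv_add_uminus mult_minus1)

lemma not_dvd_one_if_conj_norm_mem:
  assumes "is_ideal I" "1 \<notin> I" "conj_norm x \<in> I"
  shows "\<not> x dvd 1"
proof
  assume "x dvd 1"
  then obtain y where "1 = x * y" ..
  then have "1 = conj_norm y * conj_norm x"
    by (metis conj_norm_mult conj_norm_one mult.commute)
  with assms show False
    by (metis is_idealD(3))
qed

lemma ideal_gen_complexify:
  fixes I :: "('v, real) mpoly set"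
  assumes "is_ideal I"
  shows "ideal_gen (complexify ` I) = {z. re_part z \<in> I \<and> im_part z \<in> I}"
proof (intro equalityI subsetI)
  fix z assume "z \<in> ideal_gen (complexify ` I)"
  then obtain m :: nat and p h where z: "z = (\<Sum>i<m. p i * h i)" and h: "\<forall>i<m. h i \<in> complexify ` I"
    unfolding ideal_gen_def by blast
  have "re_part (\<Sum>i<n. p i * h i) \<in> I \<and> im_part (\<Sum>i<n. p i * h i) \<in> I" if "n \<le> m" for n
    using that
  proof (induction n)
    case 0
    then show ?case
      using is_idealD(1)[OF assms] by simp
  next
    case (Suc n)
    then obtain a where "a \<in> I" "h n = complexify a"
      using h by (meson Suc_le_lessD imageE)
    then show ?case
      using Suc is_idealD[OF assms]
      by (simp add: re_part_add im_part_add re_part_times im_part_times)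
  qed
  with z show "z \<in> {z. re_part z \<in> I \<and> im_part z \<in> I}"
    by simp
next
  fix z assume "z \<in> {z. re_part z \<in> I \<and> im_part z \<in> I}"
  then have "z = (\<Sum>i<2. [1, imag_unit] ! i * [complexify (re_part z), complexify (im_part z)] ! i)"
    and "\<forall>i<2. [complexify (re_part z), complexify (im_part z)] ! i \<in> complexify ` I"
    by (simp_all add: numeral_2_eq_2 complex_form_re_im less_Suc_eq)
  then show "z \<in> ideal_gen (complexify ` I)"
    unfolding ideal_gen_def by blast
qed

lemma is_ideal_ideal_gen_complexify:
  assumes "is_ideal I"
  shows "is_ideal (ideal_gen (complexify ` I))"
  unfolding ideal_gen_complexify[OF assms] is_ideal_def
  using is_idealD[OF assms] by (simp add: re_part_add im_part_add re_part_times im_part_times)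

lemma complexify_mem_ideal_gen_iff:
  assumes "is_ideal I"
  shows "complexify f \<in> ideal_gen (complexify ` I) \<longleftrightarrow> f \<in> I"
  using is_idealD(1)[OF assms] by (simp add: ideal_gen_complexify[OF assms])

lemma ex_not_mem_conj_norm_mem:
  assumes "prime_ideal I" and "\<not> prime_ideal (ideal_gen (complexify ` I))"
  shows "\<exists>x. x \<notin> ideal_gen (complexify ` I) \<and> conj_norm x \<in> I"
proof -
  let ?J = "ideal_gen (complexify ` I)"
  have I: "is_ideal I" "1 \<notin> I" "\<And>a b. a * b \<in> I \<Longrightarrow> a \<in> I \<or> b \<in> I"
    using assms(1) by (auto simp: prime_ideal_def)
  have J: "is_ideal ?J" "1 \<notin> ?J"
    using I by (simp_all add: is_ideal_ideal_gen_complexify complexify_mem_ideal_gen_iff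
        flip: complexify_one)
  with assms(2) obtain a b where ab: "a * b \<in> ?J" "a \<notin> ?J" "b \<notin> ?J"
    by (auto simp: prime_ideal_def)
  have "complexify (conj_norm (a * b)) \<in> ?J"
    using is_idealD(3)[OF J(1) ab(1), of "conj_poly (a * b)"]
    by (simp add: complexify_conj_norm mult.commute)
  then have "conj_norm a \<in> I \<or> conj_norm b \<in> I"
    by (intro I(3)) (simp add: complexify_mem_ideal_gen_iff[OF I(1)] conj_norm_mult)
  with ab show ?thesis
    by blast
qed

theorem lemma3p4:
  fixes I :: "('v::finite, real) mpoly set"
  assumes "prime_ideal I"
    and "\<not> prime_ideal (ideal_gen (complexify ` I))"
  shows "\<exists>g :: ('v, complex) mpoly. irreducible g \<and> g \<notin> ideal_gen (complexify ` I)
           \<and> g * conj_poly g \<in> complexify ` I"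
proof -
  define J where "J = ideal_gen (complexify ` I)"
  define P where "P y \<longleftrightarrow> y \<notin> J \<and> conj_norm y \<in> I" for y
  have I: "is_ideal I" "1 \<notin> I" "\<And>a b. a * b \<in> I \<Longrightarrow> a \<in> I \<or> b \<in> I"
    using assms(1) by (auto simp: prime_ideal_def)
  have J: "is_ideal J"
    unfolding J_def using I(1) by (rule is_ideal_ideal_gen_complexify)
  obtain x\<^sub>0 where x\<^sub>0: "P x\<^sub>0"
    using ex_not_mem_conj_norm_mem[OF assms] unfolding P_def J_def by blast
  have nonunit: "x \<noteq> 0 \<and> \<not> x dvd 1" if "P x" for x
    using that is_idealD(1)[OF J] not_dvd_one_if_conj_norm_mem[OF I(1,2)] by (auto simp: P_def)
  have split: "P c \<or> P d" if "P (c * d)" for c d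
    using that I(3)[of "conj_norm c" "conj_norm d"] is_idealD(3)[OF J]
    by (metis P_def conj_norm_mult mult.commute)
  obtain x where "irreducible x" "P x"
    using ex_irreducible_if_split_closed[of P, OF x\<^sub>0 nonunit split] by blast
  then show ?thesis
    unfolding P_def J_def by (metis complexify_conj_norm image_eqI)
qed

end
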